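(* Let $L$ be a distributive lattice with $|L|\ge2$. Then: (1) $\mathrm{FBL}\langle L\rangle$ is not Dedekind $\sigma$-complete; (2) the norm of $\mathrm{FBL}\langle L\rangle$ is not order continuous; (3) $\mathrm{FBL}\langle L\rangle$ has no atoms.
   Context: $L^*$ is the set of all lattice homomorphisms $x^*:L\to[-1,1]$; for $x\in L$, $\delta_x:L^*\to\mathbb R$ is $\delta_x(x^* )=x^*(x)$. A function $f:L^*\to\mathbb R$ is positively homogeneous if $f(\lambda x^* )=\lambda f(x^* )$ whenever $\lambda\ge0$ and $\lambda x^*\in L^*$; for such $f$, $\|f\|=\sup\{\sum_{i=1}^m|f(x_i^* )|: m\in\mathbb N,\ x_i^*\in L^*,\ \sup_{x\in L}\sum_{i=1}^m|x_i^*(x)|\le1\}$. $\mathrm{FBL}\langle L\rangle$ is the norm closure of the vector sublattice generated by $\{\delta_x:x\in L\}$ inside the Banach lattice of positively homogeneous functions on $L^*$ with finite norm, with pointwise order and operations. *)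

theory Defs
  imports Complex_Main "HOL-Library.Countable_Set"
begin

text \<open>Functions on L* are represented as functions of type ('a => real) => real
  which vanish outside L* (so that pointwise equality on L* is equality).\<close>

definition Lstar :: "('a::lattice \<Rightarrow> real) set" where
  "Lstar = {xs. (\<forall>x y. xs (sup x y) = max (xs x) (xs y))
              \<and> (\<forall>x y. xs (inf x y) = min (xs x) (xs y))
              \<and> (\<forall>x. xs x \<in> {-1..1})}"

definition delta :: "'a::lattice \<Rightarrow> (('a \<Rightarrow> real) \<Rightarrow> real)" where
  "delta x = (\<lambda>xs. if xs \<in> Lstar then xs x else 0)"

definition pos_homog :: "(('a::lattice \<Rightarrow> real) \<Rightarrow> real) \<Rightarrow> bool" where
  "pos_homog f \<longleftrightarrow> (\<forall>lam xs. lam \<ge> 0 \<and> xs \<in> Lstar \<and> (\<lambda>x. lam * xs x) \<in> Lstar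
       \<longrightarrow> f (\<lambda>x. lam * xs x) = lam * f xs)"

definition fbl_norm_sums :: "(('a::lattice \<Rightarrow> real) \<Rightarrow> real) \<Rightarrow> real set" where
  "fbl_norm_sums f = {(\<Sum>xs\<leftarrow>xss. \<bar>f xs\<bar>) | xss.
       set xss \<subseteq> Lstar \<and> (\<forall>x. (\<Sum>xs\<leftarrow>xss. \<bar>xs x\<bar>) \<le> 1)}"

definition fbl_norm :: "(('a::lattice \<Rightarrow> real) \<Rightarrow> real) \<Rightarrow> real" where
  "fbl_norm f = Sup (fbl_norm_sums f)"

definition H_space :: "(('a::lattice \<Rightarrow> real) \<Rightarrow> real) set" where
  "H_space = {f. pos_homog f \<and> bdd_above (fbl_norm_sums f) \<and> (\<forall>xs. xs \<notin> Lstar \<longrightarrow> f xs = 0)}"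

inductive_set gen_sublattice :: "(('a::lattice \<Rightarrow> real) \<Rightarrow> real) set" where
  gen_delta: "delta x \<in> gen_sublattice"
| gen_add: "f \<in> gen_sublattice \<Longrightarrow> g \<in> gen_sublattice \<Longrightarrow> (\<lambda>t. f t + g t) \<in> gen_sublattice"
| gen_scale: "f \<in> gen_sublattice \<Longrightarrow> (\<lambda>t. c * f t) \<in> gen_sublattice"
| gen_sup: "f \<in> gen_sublattice \<Longrightarrow> g \<in> gen_sublattice \<Longrightarrow> (\<lambda>t. max (f t) (g t)) \<in> gen_sublattice"
| gen_inf: "f \<in> gen_sublattice \<Longrightarrow> g \<in> gen_sublattice \<Longrightarrow> (\<lambda>t. min (f t) (g t)) \<in> gen_sublattice"

definition FBL :: "(('a::lattice \<Rightarrow> real) \<Rightarrow> real) set" where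
  "FBL = {f \<in> H_space. \<forall>e>0. \<exists>g\<in>gen_sublattice. fbl_norm (\<lambda>t. f t - g t) < e}"

definition is_sup_in :: "'b::order set \<Rightarrow> 'b set \<Rightarrow> 'b \<Rightarrow> bool" where
  "is_sup_in S A s \<longleftrightarrow> s \<in> S \<and> (\<forall>a\<in>A. a \<le> s) \<and> (\<forall>u\<in>S. (\<forall>a\<in>A. a \<le> u) \<longrightarrow> s \<le> u)"

definition is_inf_in :: "'b::order set \<Rightarrow> 'b set \<Rightarrow> 'b \<Rightarrow> bool" where
  "is_inf_in S A s \<longleftrightarrow> s \<in> S \<and> (\<forall>a\<in>A. s \<le> a) \<and> (\<forall>u\<in>S. (\<forall>a\<in>A. u \<le> a) \<longrightarrow> u \<le> s)"

definition dedekind_sigma_complete :: "'b::order set \<Rightarrow> bool" where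
  "dedekind_sigma_complete S \<longleftrightarrow>
     (\<forall>A. A \<subseteq> S \<and> A \<noteq> {} \<and> countable A \<and> (\<exists>u\<in>S. \<forall>a\<in>A. a \<le> u) \<longrightarrow> (\<exists>s. is_sup_in S A s))"

text \<open>Order continuity of the norm N: whenever a net decreases to 0 its norms tend to 0.
  A decreasing net is represented by its (downward directed) range D.\<close>
definition order_continuous_norm ::
  "(('c \<Rightarrow> real)) set \<Rightarrow> (('c \<Rightarrow> real) \<Rightarrow> real) \<Rightarrow> bool" where
  "order_continuous_norm S N \<longleftrightarrow>
     (\<forall>D. D \<subseteq> S \<and> D \<noteq> {} \<and> (\<forall>x\<in>D. \<forall>y\<in>D. \<exists>z\<in>D. z \<le> x \<and> z \<le> y)
          \<and> is_inf_in S D (\<lambda>_. 0) \<longrightarrow> (\<forall>e>0. \<exists>x\<in>D. N x < e))"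

definition is_atom_in :: "(('c \<Rightarrow> real)) set \<Rightarrow> ('c \<Rightarrow> real) \<Rightarrow> bool" where
  "is_atom_in S a \<longleftrightarrow> a \<in> S \<and> (\<lambda>_. 0) \<le> a \<and> a \<noteq> (\<lambda>_. 0) \<and>
     (\<forall>y\<in>S. (\<lambda>_. 0) \<le> y \<and> y \<le> a \<longrightarrow> (\<exists>c::real. y = (\<lambda>t. c * a t)))"

end

theory Submission
  imports Defs
begin

text \<open>
  By the prime filter theorem, \<open>\<not> v \<le> u\<close> in a distributive lattice yields a lattice homomorphism
  \<open>\<chi> : L \<rightarrow> {0, 1}\<close> with \<open>\<chi> u = 0\<close> and \<open>\<chi> v = 1\<close>. Elements of \<open>FBL\<langle>L\<rangle>\<close> are uniform limits on \<open>L*\<close> of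
  Lipschitz functions, hence continuous for the sup-distance on \<open>L*\<close>, and this continuity is what
  breaks each of the three properties:
  \<^item> the ramps \<open>min (n \<delta>\<^sub>u\<^sup>+) (\<delta>\<^sub>v - \<delta>\<^sub>u)\<^sup>+\<close> are bounded, but their supremum would be \<open>\<ge> 1/2\<close> at
    \<open>\<chi>/2 + t\<close> and \<open>\<le> 0\<close> at \<open>\<chi>/2 - t\<close> for every \<open>t > 0\<close>;
  \<^item> the spikes \<open>(\<delta>\<^sub>v - \<delta>\<^sub>u - n |\<delta>\<^sub>u|)\<^sup>+\<close> all take the value 1 at \<open>\<chi>\<close>, so have norm \<open>\<ge> 1\<close>, yet their
    infimum is 0 since they eventually vanish on the dense set where \<open>\<delta>\<^sub>u \<noteq> 0\<close>;
  \<^item> near a point where \<open>a > 0\<close> there are two points separated by a positive element \<open>h\<close> of the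
    generated sublattice, so \<open>0 \<le> a \<sqinter> h \<le> a\<close> although \<open>a \<sqinter> h\<close> is not a multiple of \<open>a\<close>.
\<close>

section \<open>Prime filters\<close>

definition lattice_filter :: "'a::lattice set \<Rightarrow> bool" where
  "lattice_filter F \<longleftrightarrow> (\<forall>x\<in>F. \<forall>y. x \<le> y \<longrightarrow> y \<in> F) \<and> (\<forall>x\<in>F. \<forall>y\<in>F. inf x y \<in> F)"

lemma lattice_filter_upclosed: "lattice_filter F \<Longrightarrow> x \<in> F \<Longrightarrow> x \<le> y \<Longrightarrow> y \<in> F"
  unfolding lattice_filter_def by blast

lemma lattice_filter_inf: "lattice_filter F \<Longrightarrow> x \<in> F \<Longrightarrow> y \<in> F \<Longrightarrow> inf x y \<in> F"
  unfolding lattice_filter_def by blast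

lemma lattice_filter_inf_iff: "lattice_filter F \<Longrightarrow> inf x y \<in> F \<longleftrightarrow> x \<in> F \<and> y \<in> F"
  by (meson inf_le1 inf_le2 lattice_filter_inf lattice_filter_upclosed)

lemma lattice_filter_Union_chain:
  assumes "subset.chain {F. lattice_filter F} \<C>"
  shows "lattice_filter (\<Union>\<C>)"
  unfolding lattice_filter_def
proof (intro conjI ballI allI impI)
  fix x y assume "x \<in> \<Union>\<C>" "x \<le> y"
  then show "y \<in> \<Union>\<C>"
    using assms lattice_filter_upclosed unfolding subset_chain_def by blast
next
  fix x y assume "x \<in> \<Union>\<C>" "y \<in> \<Union>\<C>"
  then obtain X Y where XY: "X \<in> \<C>" "Y \<in> \<C>" "x \<in> X" "y \<in> Y" by blast
  with assms have "X \<subseteq> Y \<or> Y \<subseteq> X" "lattice_filter X" "lattice_filter Y"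
    unfolding subset_chain_def by auto
  with XY show "inf x y \<in> \<Union>\<C>" using lattice_filter_inf by blast
qed

lemma lattice_filter_principal: "lattice_filter {y. v \<le> y}"
  unfolding lattice_filter_def by (simp add: order_trans[of v])

lemma maximal_filter_avoiding_exists:
  fixes u v :: "'a::lattice"
  assumes "\<not> v \<le> u"
  obtains F where "lattice_filter F" "v \<in> F" "u \<notin> F"
    "\<And>G. lattice_filter G \<Longrightarrow> u \<notin> G \<Longrightarrow> F \<subseteq> G \<Longrightarrow> G = F"
proof -
  define \<A> where "\<A> = {F. lattice_filter F \<and> v \<in> F \<and> u \<notin> F}"
  have "{y. v \<le> y} \<in> \<A>"
    using assms lattice_filter_principal unfolding \<A>_def by simp
  moreover have "\<Union>\<C> \<in> \<A>" if "\<C> \<noteq> {}" "subset.chain \<A> \<C>" for \<C>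
  proof -
    have "\<C> \<subseteq> \<A>" using that(2) unfolding subset_chain_def by simp
    then have "subset.chain {F. lattice_filter F} \<C>"
      using that(2) unfolding \<A>_def subset_chain_def by blast
    then have "lattice_filter (\<Union>\<C>)" by (rule lattice_filter_Union_chain)
    moreover have "v \<in> \<Union>\<C>" "u \<notin> \<Union>\<C>" using \<open>\<C> \<subseteq> \<A>\<close> that(1) unfolding \<A>_def by auto
    ultimately show ?thesis unfolding \<A>_def by simp
  qed
  ultimately obtain F where "F \<in> \<A>" "\<forall>G\<in>\<A>. F \<subseteq> G \<longrightarrow> G = F"
    using subset_Zorn_nonempty[of \<A>] by blast
  then show ?thesis using that unfolding \<A>_def by blast
qed

text \<open>If \<open>z \<notin> F\<close>, maximality forces the filter generated by \<open>F\<close> and \<open>z\<close> to contain \<open>u\<close>;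
  distributivity combines two such witnesses for \<open>x\<close> and \<open>y\<close>.\<close>
lemma maximal_filter_avoiding_prime:
  fixes u :: "'a::distrib_lattice"
  assumes F: "lattice_filter F" "u \<notin> F"
    and max: "\<And>G. lattice_filter G \<Longrightarrow> u \<notin> G \<Longrightarrow> F \<subseteq> G \<Longrightarrow> G = F"
    and sup: "sup x y \<in> F"
  shows "x \<in> F \<or> y \<in> F"
proof -
  have witness: "\<exists>f\<in>F. inf f z \<le> u" if "z \<notin> F" for z
  proof (rule ccontr)
    assume none: "\<not> (\<exists>f\<in>F. inf f z \<le> u)"
    define G where "G = {w. \<exists>f\<in>F. inf f z \<le> w}"
    have "lattice_filter G" unfolding lattice_filter_def
    proof (intro conjI ballI allI impI)
      fix a b assume "a \<in> G" "a \<le> b"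
      then show "b \<in> G" unfolding G_def using order_trans by blast
    next
      fix a b assume "a \<in> G" "b \<in> G"
      then obtain f1 f2 where f: "f1 \<in> F" "f2 \<in> F" "inf f1 z \<le> a" "inf f2 z \<le> b"
        unfolding G_def by blast
      then have "inf (inf f1 f2) z \<le> inf a b"
        by (meson inf.bounded_iff inf_le1 inf_le2 order_trans)
      with f show "inf a b \<in> G" using lattice_filter_inf[OF F(1)] unfolding G_def by blast
    qed
    moreover have "u \<notin> G" "F \<subseteq> G" using none unfolding G_def by (auto intro: inf_le1)
    moreover have "z \<in> G" using sup unfolding G_def by (auto intro!: bexI[of _ "sup x y"])
    ultimately show False using max that by blast
  qed
  show ?thesis
  proof (rule ccontr)
    assume "\<not> (x \<in> F \<or> y \<in> F)"
    then obtain f1 f2 where f: "f1 \<in> F" "f2 \<in> F" "inf f1 x \<le> u" "inf f2 y \<le> u"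
      using witness by blast
    have "inf (inf f1 f2) (sup x y) \<in> F" using lattice_filter_inf[OF F(1)] f sup by blast
    moreover have "inf (inf f1 f2) (sup x y) \<le> u"
      unfolding inf_sup_distrib1
      using f by (meson inf.cobounded1 inf.cobounded2 inf_mono order_trans sup.boundedI order_refl)
    ultimately show False using lattice_filter_upclosed[OF F(1)] F(2) by blast
  qed
qed

lemma Lstar_separates_points:
  fixes u v :: "'a::distrib_lattice"
  assumes "\<not> v \<le> u"
  obtains \<chi> where "\<chi> \<in> Lstar" "\<chi> u = 0" "\<chi> v = 1"
proof -
  obtain F where F: "lattice_filter F" "v \<in> F" "u \<notin> F"
    and max: "\<And>G. lattice_filter G \<Longrightarrow> u \<notin> G \<Longrightarrow> F \<subseteq> G \<Longrightarrow> G = F"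
    using maximal_filter_avoiding_exists[OF assms] by blast
  have sup_iff: "sup x y \<in> F \<longleftrightarrow> x \<in> F \<or> y \<in> F" for x y
    using maximal_filter_avoiding_prime[OF F(1,3) max] lattice_filter_upclosed[OF F(1)]
    by (meson sup_ge1 sup_ge2)
  have "(\<lambda>x. if x \<in> F then 1 else 0) \<in> Lstar"
    unfolding Lstar_def by (simp add: sup_iff lattice_filter_inf_iff[OF F(1)])
  then show ?thesis by (rule that) (use F(2,3) in auto)
qed

section \<open>Norm estimates and the generated sublattice\<close>

lemma Lstar_abs_le: "xs \<in> Lstar \<Longrightarrow> \<bar>xs x\<bar> \<le> 1"
  unfolding Lstar_def by (auto simp: abs_le_iff)

lemma Lstar_affine:
  assumes "xs \<in> Lstar" "c \<ge> 0" "\<And>x. c * xs x + d \<in> {-1..1}"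
  shows "(\<lambda>x. c * xs x + d) \<in> Lstar"
  using assms unfolding Lstar_def by (simp add: max_mult_distrib_left min_mult_distrib_left
      max_add_distrib_left min_add_distrib_left)

lemma zero_in_fbl_norm_sums: "0 \<in> fbl_norm_sums f"
  unfolding fbl_norm_sums_def by (auto intro!: exI[of _ "[]"])

lemma abs_le_fbl_norm:
  assumes "bdd_above (fbl_norm_sums f)" "q \<in> Lstar"
  shows "\<bar>f q\<bar> \<le> fbl_norm f"
proof -
  have "\<bar>f q\<bar> \<in> fbl_norm_sums f"
    using assms(2) unfolding fbl_norm_sums_def by (auto intro!: exI[of _ "[q]"] simp: Lstar_abs_le)
  then show ?thesis unfolding fbl_norm_def using assms(1) by (rule cSup_upper)
qed

lemma fbl_norm_zero: "fbl_norm (\<lambda>_::'a::lattice \<Rightarrow> real. 0) = 0"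
proof -
  have "fbl_norm_sums (\<lambda>_::'a \<Rightarrow> real. 0) = {0}"
    unfolding fbl_norm_sums_def by (auto intro!: exI[of _ "[]"])
  then show ?thesis unfolding fbl_norm_def by simp
qed

lemma fbl_norm_dominated:
  fixes f g h :: "('a::lattice \<Rightarrow> real) \<Rightarrow> real"
  assumes bg: "bdd_above (fbl_norm_sums g)" and bh: "bdd_above (fbl_norm_sums h)"
    and a: "a \<ge> 0" and b: "b \<ge> 0"
    and le: "\<And>t. t \<in> Lstar \<Longrightarrow> \<bar>f t\<bar> \<le> a * \<bar>g t\<bar> + b * \<bar>h t\<bar>"
  shows "bdd_above (fbl_norm_sums f)" "fbl_norm f \<le> a * fbl_norm g + b * fbl_norm h"
proof -
  have sum_le_norm: "(\<Sum>xs\<leftarrow>xss. \<bar>k xs\<bar>) \<le> fbl_norm k"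
    if "bdd_above (fbl_norm_sums k)" "set xss \<subseteq> Lstar" "\<forall>x. (\<Sum>xs\<leftarrow>xss. \<bar>xs x\<bar>) \<le> 1"
    for k :: "('a \<Rightarrow> real) \<Rightarrow> real" and xss
  proof -
    have "(\<Sum>xs\<leftarrow>xss. \<bar>k xs\<bar>) \<in> fbl_norm_sums k"
      using that(2,3) unfolding fbl_norm_sums_def by blast
    then show ?thesis unfolding fbl_norm_def using that(1) by (rule cSup_upper)
  qed
  have bound: "s \<le> a * fbl_norm g + b * fbl_norm h" if sm: "s \<in> fbl_norm_sums f" for s
  proof -
    obtain xss :: "('a \<Rightarrow> real) list" where s: "s = (\<Sum>xs\<leftarrow>xss. \<bar>f xs\<bar>)"
      and xss: "set xss \<subseteq> Lstar" "\<forall>x. (\<Sum>xs\<leftarrow>xss. \<bar>xs x\<bar>) \<le> 1"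
      using sm unfolding fbl_norm_sums_def by blast
    have "s \<le> (\<Sum>xs\<leftarrow>xss. a * \<bar>g xs\<bar> + b * \<bar>h xs\<bar>)"
      unfolding s by (rule sum_list_mono) (use xss le in auto)
    also have "\<dots> = a * (\<Sum>xs\<leftarrow>xss. \<bar>g xs\<bar>) + b * (\<Sum>xs\<leftarrow>xss. \<bar>h xs\<bar>)"
      by (simp add: sum_list_addf sum_list_const_mult)
    also have "\<dots> \<le> a * fbl_norm g + b * fbl_norm h"
      using sum_le_norm[OF bg xss] sum_le_norm[OF bh xss] a b by (intro add_mono mult_left_mono)
    finally show ?thesis .
  qed
  then show "bdd_above (fbl_norm_sums f)" by (rule bdd_aboveI)
  show "fbl_norm f \<le> a * fbl_norm g + b * fbl_norm h"
    unfolding fbl_norm_def[of f] by (rule cSup_least) (use zero_in_fbl_norm_sums bound in auto)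
qed

lemma abs_max_diff_le: "\<bar>max a b - max a' b'\<bar> \<le> \<bar>a - a'\<bar> + \<bar>b - (b'::real)\<bar>"
  by (simp add: max_def abs_if)

lemma abs_min_diff_le: "\<bar>min a b - min a' b'\<bar> \<le> \<bar>a - a'\<bar> + \<bar>b - (b'::real)\<bar>"
  by (simp add: min_def abs_if)

lemma H_space_diff_bdd:
  assumes "f \<in> H_space" "g \<in> H_space"
  shows "bdd_above (fbl_norm_sums (\<lambda>t. f t - g t))"
proof (rule fbl_norm_dominated(1))
  show "bdd_above (fbl_norm_sums f)" "bdd_above (fbl_norm_sums g)"
    using assms unfolding H_space_def by auto
  show "\<bar>f t - g t\<bar> \<le> 1 * \<bar>f t\<bar> + 1 * \<bar>g t\<bar>" for t
    using abs_triangle_ineq4 by simp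
qed auto

lemma H_space_inf:
  assumes "f \<in> H_space" "g \<in> H_space"
  shows "(\<lambda>t. min (f t) (g t)) \<in> H_space"
proof -
  have "bdd_above (fbl_norm_sums (\<lambda>t. min (f t) (g t)))"
  proof (rule fbl_norm_dominated(1))
    show "bdd_above (fbl_norm_sums f)" "bdd_above (fbl_norm_sums g)"
      using assms unfolding H_space_def by auto
    show "\<bar>min (f t) (g t)\<bar> \<le> 1 * \<bar>f t\<bar> + 1 * \<bar>g t\<bar>" for t
      by (simp add: min_def)
  qed auto
  moreover have "pos_homog (\<lambda>t. min (f t) (g t))"
    using assms unfolding H_space_def pos_homog_def by (simp add: min_mult_distrib_left)
  ultimately show ?thesis using assms unfolding H_space_def by simp
qed

lemma delta_Lstar: "xs \<in> Lstar \<Longrightarrow> delta x xs = xs x"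
  by (simp add: delta_def)

lemma gen_sublattice_vanishes: "f \<in> gen_sublattice \<Longrightarrow> xs \<notin> Lstar \<Longrightarrow> f xs = 0"
  by (induction rule: gen_sublattice.induct) (auto simp: delta_def)

lemma gen_sublattice_pos_homog: "f \<in> gen_sublattice \<Longrightarrow> pos_homog f"
  by (induction rule: gen_sublattice.induct)
    (auto simp: pos_homog_def delta_def algebra_simps max_mult_distrib_left min_mult_distrib_left)

lemma bdd_fbl_norm_sums_delta: "bdd_above (fbl_norm_sums (delta x))"
proof (rule bdd_aboveI)
  fix s assume "s \<in> fbl_norm_sums (delta x)"
  then obtain xss where s: "s = (\<Sum>xs\<leftarrow>xss. \<bar>delta x xs\<bar>)" and xss: "set xss \<subseteq> Lstar"
    and le1: "\<forall>x. (\<Sum>xs\<leftarrow>xss. \<bar>xs x\<bar>) \<le> 1"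
    unfolding fbl_norm_sums_def by blast
  have "s = (\<Sum>xs\<leftarrow>xss. \<bar>xs x\<bar>)"
    unfolding s using xss by (intro arg_cong[where f = sum_list] map_cong) (auto simp: delta_Lstar)
  with le1 show "s \<le> 1" by simp
qed

lemma bdd_fbl_norm_sums_combine:
  assumes "bdd_above (fbl_norm_sums f)" "bdd_above (fbl_norm_sums g)"
    and "\<And>a b. \<bar>op a b\<bar> \<le> \<bar>a\<bar> + \<bar>b\<bar>"
  shows "bdd_above (fbl_norm_sums (\<lambda>t. op (f t) (g t)))"
  using fbl_norm_dominated(1)[OF assms(1,2), of 1 1] assms(3) by simp

lemma gen_sublattice_bdd_fbl_norm_sums:
  "f \<in> gen_sublattice \<Longrightarrow> bdd_above (fbl_norm_sums f)"
proof (induction rule: gen_sublattice.induct)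
  case (gen_delta x)
  then show ?case by (rule bdd_fbl_norm_sums_delta)
next
  case (gen_add f g)
  show ?case using bdd_fbl_norm_sums_combine[OF gen_add.IH, of "(+)"] abs_triangle_ineq by simp
next
  case (gen_scale f c)
  then show ?case using fbl_norm_dominated(1)[of f f "\<bar>c\<bar>" 0] by (simp add: abs_mult)
next
  case (gen_sup f g)
  show ?case using bdd_fbl_norm_sums_combine[OF gen_sup.IH, of max] by (simp add: max_def)
next
  case (gen_inf f g)
  show ?case using bdd_fbl_norm_sums_combine[OF gen_inf.IH, of min] by (simp add: min_def)
qed

lemma gen_sublattice_H_space: "f \<in> gen_sublattice \<Longrightarrow> f \<in> H_space"
  unfolding H_space_def
  by (simp add: gen_sublattice_pos_homog gen_sublattice_bdd_fbl_norm_sums gen_sublattice_vanishes)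

lemma gen_sublattice_FBL:
  assumes "f \<in> gen_sublattice"
  shows "f \<in> FBL"
proof -
  have "fbl_norm (\<lambda>t. f t - f t) = 0" using fbl_norm_zero by simp
  with assms show ?thesis
    unfolding FBL_def using gen_sublattice_H_space[OF assms] by (auto intro!: bexI[of _ f])
qed

lemma gen_sublattice_diff:
  "f \<in> gen_sublattice \<Longrightarrow> g \<in> gen_sublattice \<Longrightarrow> (\<lambda>t. f t - g t) \<in> gen_sublattice"
  using gen_add[OF _ gen_scale[of g "-1"], of f] by simp

lemma gen_sublattice_abs:
  assumes "f \<in> gen_sublattice"
  shows "(\<lambda>t. \<bar>f t\<bar>) \<in> gen_sublattice"
proof -
  have "(\<lambda>t. max (f t) (-1 * f t)) = (\<lambda>t. \<bar>f t\<bar>)" by (auto simp: max_def abs_if)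
  with gen_sup[OF assms gen_scale[OF assms, of "-1"]] show ?thesis by simp
qed

lemma gen_sublattice_zero: "(\<lambda>_. 0) \<in> gen_sublattice"
  using gen_scale[OF gen_delta, of 0] by simp

lemma gen_sublattice_pos:
  assumes "f \<in> gen_sublattice"
  shows "(\<lambda>t. max (f t) 0) \<in> gen_sublattice"
  using gen_sup[OF assms gen_sublattice_zero] by simp

section \<open>Continuity of the elements of \<open>FBL\<close>\<close>

definition Lstar_cball :: "('a::lattice \<Rightarrow> real) \<Rightarrow> real \<Rightarrow> ('a \<Rightarrow> real) set" where
  "Lstar_cball p d = {q \<in> Lstar. \<forall>x. \<bar>q x - p x\<bar> \<le> d}"

lemma Lstar_cball_subset: "Lstar_cball p d \<subseteq> Lstar"
  unfolding Lstar_cball_def by blast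

lemma Lstar_cball_mono: "d \<le> e \<Longrightarrow> Lstar_cball p d \<subseteq> Lstar_cball p e"
  unfolding Lstar_cball_def by (auto intro: order_trans)

definition Lstar_lipschitz :: "real \<Rightarrow> (('a::lattice \<Rightarrow> real) \<Rightarrow> real) \<Rightarrow> bool" where
  "Lstar_lipschitz C f \<longleftrightarrow> (\<forall>p\<in>Lstar. \<forall>d. \<forall>q\<in>Lstar_cball p d. \<bar>f q - f p\<bar> \<le> C * d)"

lemma Lstar_lipschitz_delta: "Lstar_lipschitz 1 (delta x)"
  unfolding Lstar_lipschitz_def Lstar_cball_def by (simp add: delta_Lstar)

lemma Lstar_lipschitz_scale:
  assumes "Lstar_lipschitz C f"
  shows "Lstar_lipschitz (\<bar>c\<bar> * C) (\<lambda>t. c * f t)"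
  unfolding Lstar_lipschitz_def
proof (intro ballI allI impI)
  fix p q :: "'a \<Rightarrow> real" and d
  assume "p \<in> Lstar" "q \<in> Lstar_cball p d"
  with assms have "\<bar>f q - f p\<bar> \<le> C * d" unfolding Lstar_lipschitz_def by blast
  then have "\<bar>c\<bar> * \<bar>f q - f p\<bar> \<le> \<bar>c\<bar> * (C * d)" by (rule mult_left_mono) simp
  then show "\<bar>c * f q - c * f p\<bar> \<le> \<bar>c\<bar> * C * d"
    by (simp add: abs_mult right_diff_distrib[symmetric] mult.assoc)
qed

lemma Lstar_lipschitz_combine:
  assumes "Lstar_lipschitz C1 f" "Lstar_lipschitz C2 g"
    and op: "\<And>a b a' b'. \<bar>op a b - op a' b'\<bar> \<le> \<bar>a - a'\<bar> + \<bar>b - b'\<bar>"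
  shows "Lstar_lipschitz (C1 + C2) (\<lambda>t. op (f t) (g t))"
  unfolding Lstar_lipschitz_def
proof (intro ballI allI impI)
  fix p q :: "'a \<Rightarrow> real" and d
  assume "p \<in> Lstar" "q \<in> Lstar_cball p d"
  with assms(1,2) have "\<bar>f q - f p\<bar> \<le> C1 * d" "\<bar>g q - g p\<bar> \<le> C2 * d"
    unfolding Lstar_lipschitz_def by blast+
  with op[of "f q" "g q" "f p" "g p"]
  show "\<bar>op (f q) (g q) - op (f p) (g p)\<bar> \<le> (C1 + C2) * d"
    by (simp add: distrib_right)
qed

lemma gen_sublattice_lipschitz:
  "f \<in> gen_sublattice \<Longrightarrow> \<exists>C\<ge>0. Lstar_lipschitz C f"
proof (induction rule: gen_sublattice.induct)
  case (gen_delta x)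
  show ?case using Lstar_lipschitz_delta by (intro exI[of _ 1]) simp
next
  case (gen_add f g)
  then obtain C1 C2 where "C1 \<ge> 0" "C2 \<ge> 0" "Lstar_lipschitz C1 f" "Lstar_lipschitz C2 g" by blast
  moreover have "\<bar>a + b - (a' + b')\<bar> \<le> \<bar>a - a'\<bar> + \<bar>b - b'\<bar>" for a b a' b' :: real
    by arith
  ultimately show ?case
    using Lstar_lipschitz_combine[of C1 f C2 g "(+)"] by (intro exI[of _ "C1 + C2"]) simp
next
  case (gen_scale f c)
  then obtain C where "C \<ge> 0" "Lstar_lipschitz C f" by blast
  with Lstar_lipschitz_scale[of C f c] show ?case by (intro exI[of _ "\<bar>c\<bar> * C"]) simp
next
  case (gen_sup f g)
  then obtain C1 C2 where "C1 \<ge> 0" "C2 \<ge> 0" "Lstar_lipschitz C1 f" "Lstar_lipschitz C2 g" by blast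
  with Lstar_lipschitz_combine[of C1 f C2 g max, OF _ _ abs_max_diff_le] show ?case
    by (intro exI[of _ "C1 + C2"]) simp
next
  case (gen_inf f g)
  then obtain C1 C2 where "C1 \<ge> 0" "C2 \<ge> 0" "Lstar_lipschitz C1 f" "Lstar_lipschitz C2 g" by blast
  with Lstar_lipschitz_combine[of C1 f C2 g min, OF _ _ abs_min_diff_le] show ?case
    by (intro exI[of _ "C1 + C2"]) simp
qed

lemma FBL_H_space: "f \<in> FBL \<Longrightarrow> f \<in> H_space"
  unfolding FBL_def by blast

lemma FBL_vanishes: "f \<in> FBL \<Longrightarrow> xs \<notin> Lstar \<Longrightarrow> f xs = 0"
  using FBL_H_space unfolding H_space_def by blast

lemma FBL_approx:
  assumes "f \<in> FBL" "e > 0"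
  obtains g where "g \<in> gen_sublattice" "fbl_norm (\<lambda>t. f t - g t) < e"
  using assms unfolding FBL_def by blast

lemma FBL_uniform_approx:
  assumes "f \<in> FBL" "e > 0"
  obtains g where "g \<in> gen_sublattice" "\<And>q. q \<in> Lstar \<Longrightarrow> \<bar>f q - g q\<bar> < e"
proof -
  obtain g where g: "g \<in> gen_sublattice" and fg: "fbl_norm (\<lambda>t. f t - g t) < e"
    using FBL_approx[OF assms] .
  have "bdd_above (fbl_norm_sums (\<lambda>t. f t - g t))"
    using H_space_diff_bdd[OF FBL_H_space[OF assms(1)] gen_sublattice_H_space[OF g]] .
  with fg have "\<bar>f q - g q\<bar> < e" if "q \<in> Lstar" for q
    using abs_le_fbl_norm[OF _ that] by fastforce
  with g that show ?thesis by blast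
qed

lemma FBL_continuous:
  assumes f: "f \<in> FBL" and p: "p \<in> Lstar" and e: "e > 0"
  obtains d where "d > 0" "\<And>q. q \<in> Lstar_cball p d \<Longrightarrow> \<bar>f q - f p\<bar> < e"
proof -
  obtain g where g: "g \<in> gen_sublattice" and fg: "\<And>q. q \<in> Lstar \<Longrightarrow> \<bar>f q - g q\<bar> < e / 3"
    using FBL_uniform_approx[OF f, of "e / 3"] e by auto
  obtain C where C: "C \<ge> 0" "Lstar_lipschitz C g"
    using gen_sublattice_lipschitz[OF g] by blast
  define d where "d = e / (3 * (C + 1))"
  have d: "d > 0" using e C(1) unfolding d_def by simp
  have "C * d \<le> (C + 1) * d" using d by simp
  also have "\<dots> = e / 3" unfolding d_def using C(1) by (simp add: field_simps)
  finally have Cd: "C * d \<le> e / 3" .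
  have "\<bar>f q - f p\<bar> < e" if q: "q \<in> Lstar_cball p d" for q
  proof -
    have "\<bar>g q - g p\<bar> \<le> C * d" using C(2) p q unfolding Lstar_lipschitz_def by blast
    moreover have "q \<in> Lstar" using q Lstar_cball_subset by blast
    ultimately show ?thesis using fg[of q] fg[OF p] Cd by linarith
  qed
  with d that show ?thesis by blast
qed

lemma FBL_positive_near:
  assumes "f \<in> FBL" "p \<in> Lstar" "f p > 0"
  obtains d where "d > 0" "\<And>q. q \<in> Lstar_cball p d \<Longrightarrow> f q > 0"
proof -
  obtain d where "d > 0" and near: "\<And>q. q \<in> Lstar_cball p d \<Longrightarrow> \<bar>f q - f p\<bar> < f p"
    using FBL_continuous[OF assms] by blast
  show ?thesis
  proof (rule that[OF \<open>d > 0\<close>])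
    fix q assume "q \<in> Lstar_cball p d"
    with near have "\<bar>f q - f p\<bar> < f p" by blast
    then show "f q > 0" by linarith
  qed
qed

lemma FBL_inf:
  assumes f: "f \<in> FBL" and g: "g \<in> FBL"
  shows "(\<lambda>t. min (f t) (g t)) \<in> FBL"
proof -
  have "\<exists>k\<in>gen_sublattice. fbl_norm (\<lambda>t. min (f t) (g t) - k t) < e" if e: "e > 0" for e
  proof -
    obtain f' where f': "f' \<in> gen_sublattice" "fbl_norm (\<lambda>t. f t - f' t) < e / 2"
      using FBL_approx[OF f, of "e / 2"] e by auto
    obtain g' where g': "g' \<in> gen_sublattice" "fbl_norm (\<lambda>t. g t - g' t) < e / 2"
      using FBL_approx[OF g, of "e / 2"] e by auto
    have "fbl_norm (\<lambda>t. min (f t) (g t) - min (f' t) (g' t))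
        \<le> 1 * fbl_norm (\<lambda>t. f t - f' t) + 1 * fbl_norm (\<lambda>t. g t - g' t)"
      using H_space_diff_bdd[OF FBL_H_space[OF f] gen_sublattice_H_space[OF f'(1)]]
        H_space_diff_bdd[OF FBL_H_space[OF g] gen_sublattice_H_space[OF g'(1)]]
      by (intro fbl_norm_dominated(2)) (auto simp: abs_min_diff_le)
    with f'(2) g'(2) have "fbl_norm (\<lambda>t. min (f t) (g t) - min (f' t) (g' t)) < e" by simp
    with gen_inf[OF f'(1) g'(1)] show ?thesis
      by (intro bexI[where x = "\<lambda>t. min (f' t) (g' t)"]) simp_all
  qed
  with H_space_inf[OF FBL_H_space[OF f] FBL_H_space[OF g]] show ?thesis
    unfolding FBL_def by blast
qed

section \<open>Order continuity\<close>

lemma Lstar_shift_up: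
  assumes p: "p \<in> Lstar" and t: "0 \<le> t" "t \<le> 1"
  shows "(\<lambda>x. (1 - t) * p x + t) \<in> Lstar_cball p (2 * t)"
proof -
  have bounds: "-1 \<le> p y" "p y \<le> 1" for y using Lstar_abs_le[OF p, of y] by auto
  have scaled: "\<bar>(1 - t) * p y\<bar> \<le> 1 - t" for y
    using mult_left_mono[of "\<bar>p y\<bar>" 1 "1 - t"] Lstar_abs_le[OF p, of y] t by (simp add: abs_mult)
  have "(1 - t) * p y + t \<in> {-1..1}" for y using scaled[of y] t by (auto simp: abs_le_iff)
  then have "(\<lambda>x. (1 - t) * p x + t) \<in> Lstar" using Lstar_affine[OF p] t by simp
  moreover have "\<bar>(1 - t) * p x + t - p x\<bar> \<le> 2 * t" for x
  proof -
    have "(1 - t) * p x + t - p x = t * (1 - p x)" by algebra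
    moreover have "0 \<le> t * (1 - p x)" "t * (1 - p x) \<le> t * 2"
      using bounds[of x] t by (simp_all add: mult_left_mono)
    ultimately show ?thesis by simp
  qed
  ultimately show ?thesis unfolding Lstar_cball_def by simp
qed

text \<open>Points of \<open>L*\<close> not vanishing at \<open>u\<close> are dense, so by continuity this sign condition spreads
  to all of \<open>L*\<close>.\<close>
lemma FBL_nonpos_if_nonpos_off_kernel:
  fixes u :: "'a::lattice"
  assumes w: "w \<in> FBL" and nonpos: "\<And>q. q \<in> Lstar \<Longrightarrow> q u \<noteq> 0 \<Longrightarrow> w q \<le> 0"
  shows "w p \<le> 0"
proof (rule ccontr)
  assume "\<not> w p \<le> 0"
  then have p: "p \<in> Lstar" "w p > 0" using FBL_vanishes[OF w] by force+
  with nonpos have "p u = 0" by force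
  obtain d where d: "d > 0" and near: "\<And>q. q \<in> Lstar_cball p d \<Longrightarrow> w q > 0"
    using FBL_positive_near[OF w p] by blast
  define t where "t = min (d / 2) 1"
  have t: "0 < t" "t \<le> 1" "2 * t \<le> d" using d unfolding t_def by auto
  define q where "q = (\<lambda>x. (1 - t) * p x + t)"
  have q: "q \<in> Lstar_cball p d"
    using Lstar_shift_up[OF p(1), of t] Lstar_cball_mono[OF t(3)] t unfolding q_def by auto
  then have "q \<in> Lstar" using Lstar_cball_subset by blast
  moreover have "q u \<noteq> 0" using \<open>p u = 0\<close> t unfolding q_def by simp
  ultimately have "w q \<le> 0" by (rule nonpos)
  with near[OF q] show False by simp
qed

lemma not_order_continuous_normI:
  fixes d :: "nat \<Rightarrow> 'c \<Rightarrow> real"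
  assumes "range d \<subseteq> S" "decseq d" "is_inf_in S (range d) (\<lambda>_. 0)"
    and "c > 0" "\<And>n. N (d n) \<ge> c"
  shows "\<not> order_continuous_norm S N"
proof
  assume "order_continuous_norm S N"
  moreover have "\<exists>z\<in>range d. z \<le> x \<and> z \<le> y" if "x \<in> range d" "y \<in> range d" for x y
  proof -
    from that obtain m n where "x = d m" "y = d n" by blast
    with \<open>decseq d\<close> show ?thesis by (intro bexI[of _ "d (max m n)"]) (auto simp: decseq_def)
  qed
  ultimately have "\<exists>x\<in>range d. N x < c"
    using assms(1,3,4) unfolding order_continuous_norm_def by (metis rangeI empty_iff)
  then obtain x where "x \<in> range d" "N x < c" by blast
  with assms(5) show False by (auto simp: not_less[symmetric])
qed

definition spike :: "'a::lattice \<Rightarrow> 'a \<Rightarrow> nat \<Rightarrow> ('a \<Rightarrow> real) \<Rightarrow> real" where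
  "spike u v n = (\<lambda>t. max (delta v t - delta u t - real n * \<bar>delta u t\<bar>) 0)"

lemma spike_gen_sublattice: "spike u v n \<in> gen_sublattice"
  unfolding spike_def
  by (intro gen_sublattice_pos gen_sublattice_diff gen_delta gen_scale gen_sublattice_abs)

lemma decseq_spike: "decseq (spike u v)"
proof (rule decseq_SucI, rule le_funI)
  fix n t
  have "real n * \<bar>delta u t\<bar> \<le> real (Suc n) * \<bar>delta u t\<bar>" by (intro mult_right_mono) auto
  then show "spike u v (Suc n) t \<le> spike u v n t" unfolding spike_def by simp
qed

lemma spike_eventually_zero:
  assumes "q \<in> Lstar" "q u \<noteq> 0"
  obtains n where "spike u v n q = 0"
proof -
  obtain n where "\<bar>q v - q u\<bar> / \<bar>q u\<bar> < real n" using reals_Archimedean2 by blast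
  with assms(2) have "q v - q u < real n * \<bar>q u\<bar>" by (simp add: pos_divide_less_eq)
  with assms(1) have "spike u v n q = 0" unfolding spike_def by (simp add: delta_Lstar)
  then show ?thesis by (rule that)
qed

lemma inf_spike_zero: "is_inf_in FBL (range (spike u v)) (\<lambda>_. 0)"
  unfolding is_inf_in_def
proof (intro conjI ballI impI)
  show "(\<lambda>_. 0) \<in> FBL" using gen_sublattice_FBL[OF gen_sublattice_zero] .
next
  fix a assume "a \<in> range (spike u v)"
  then show "(\<lambda>_. 0) \<le> a" by (auto simp: spike_def le_fun_def)
next
  fix w assume w: "w \<in> FBL" and lower: "\<forall>a\<in>range (spike u v). w \<le> a"
  have "w q \<le> 0" if q: "q \<in> Lstar" "q u \<noteq> 0" for q
  proof -
    obtain n where "spike u v n q = 0" using spike_eventually_zero[OF q] .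
    moreover have "w q \<le> spike u v n q" using lower by (auto simp: le_fun_def)
    ultimately show ?thesis by simp
  qed
  then show "w \<le> (\<lambda>_. 0)" using FBL_nonpos_if_nonpos_off_kernel[OF w] by (auto simp: le_fun_def)
qed

lemma FBL_not_order_continuous:
  fixes \<chi> :: "'a::lattice \<Rightarrow> real"
  assumes "\<chi> \<in> Lstar" "\<chi> u = 0" "\<chi> v = 1"
  shows "\<not> order_continuous_norm (FBL :: (('a \<Rightarrow> real) \<Rightarrow> real) set) fbl_norm"
proof (rule not_order_continuous_normI[OF _ decseq_spike inf_spike_zero, where c = 1])
  show "range (spike u v) \<subseteq> FBL" using gen_sublattice_FBL[OF spike_gen_sublattice] by blast
  show "1 \<le> fbl_norm (spike u v n)" for n
    using abs_le_fbl_norm[OF gen_sublattice_bdd_fbl_norm_sums[OF spike_gen_sublattice] assms(1),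
        of u v n]
      assms by (simp add: spike_def delta_Lstar)
qed simp

section \<open>Dedekind \<open>\<sigma>\<close>-completeness\<close>

definition ramp :: "'a::lattice \<Rightarrow> 'a \<Rightarrow> nat \<Rightarrow> ('a \<Rightarrow> real) \<Rightarrow> real" where
  "ramp u v n = (\<lambda>t. min (real n * max (delta u t) 0) (max (delta v t - delta u t) 0))"

lemma ramp_gen_sublattice: "ramp u v n \<in> gen_sublattice"
  unfolding ramp_def by (intro gen_inf gen_scale gen_sublattice_pos gen_sublattice_diff gen_delta)

lemma sup_ramp_ge:
  assumes s: "is_sup_in FBL (range (ramp u v)) s" and q: "q \<in> Lstar" "q u > 0"
  shows "q v - q u \<le> s q"
proof -
  obtain n where "(q v - q u) / q u < real n" using reals_Archimedean2 by blast
  with q(2) have "q v - q u \<le> real n * q u" by (simp add: pos_divide_less_eq)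
  with q have "q v - q u \<le> ramp u v n q" unfolding ramp_def by (simp add: delta_Lstar)
  also have "\<dots> \<le> s q" using s unfolding is_sup_in_def le_fun_def by blast
  finally show ?thesis .
qed

lemma sup_ramp_nonpos:
  assumes s: "is_sup_in FBL (range (ramp u v)) s" and q: "q \<in> Lstar" "q u < 0"
  shows "s q \<le> 0"
proof -
  define m where "m = \<bar>q v - q u\<bar> / - q u"
  define h where "h = (\<lambda>t. max (delta v t - delta u t + m * min (delta u t) 0) 0)"
  have "(\<lambda>t. min (delta u t) 0) \<in> gen_sublattice"
    using gen_inf[OF gen_delta gen_sublattice_zero, of u] by simp
  then have "h \<in> FBL"
    unfolding h_def by (intro gen_sublattice_FBL gen_sublattice_pos gen_add gen_sublattice_diff gen_delta gen_scale)
  moreover have "ramp u v n \<le> h" for n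
    unfolding ramp_def h_def by (rule le_funI) (simp add: min_def max_def)
  ultimately have "s \<le> h" using s unfolding is_sup_in_def by blast
  moreover have "m * q u = - \<bar>q v - q u\<bar>" unfolding m_def using q(2) by simp
  then have "h q = 0" unfolding h_def using q by (simp add: delta_Lstar)
  ultimately show ?thesis by (metis le_funD)
qed

lemma Lstar_half_shift:
  assumes "\<chi> \<in> Lstar" "\<bar>c\<bar> \<le> 1/2"
  shows "(\<lambda>x. 1/2 * \<chi> x + c) \<in> Lstar_cball (\<lambda>x. 1/2 * \<chi> x) \<bar>c\<bar>"
proof -
  have "1/2 * \<chi> x + c \<in> {-1..1}" for x
    using Lstar_abs_le[OF assms(1), of x] assms(2) by (auto simp: abs_le_iff)
  then have "(\<lambda>x. 1/2 * \<chi> x + c) \<in> Lstar" by (intro Lstar_affine[OF assms(1)]) auto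
  then show ?thesis unfolding Lstar_cball_def by simp
qed

lemma FBL_not_dedekind_sigma_complete:
  fixes \<chi> :: "'a::lattice \<Rightarrow> real"
  assumes \<chi>: "\<chi> \<in> Lstar" "\<chi> u = 0" "\<chi> v = 1"
  shows "\<not> dedekind_sigma_complete (FBL :: (('a \<Rightarrow> real) \<Rightarrow> real) set)"
proof
  assume dsc: "dedekind_sigma_complete (FBL :: (('a \<Rightarrow> real) \<Rightarrow> real) set)"
  have "range (ramp u v) \<subseteq> FBL" using gen_sublattice_FBL[OF ramp_gen_sublattice] by blast
  moreover have "(\<lambda>t. max (delta v t - delta u t) 0) \<in> FBL"
    by (intro gen_sublattice_FBL gen_sublattice_pos gen_sublattice_diff gen_delta)
  moreover have "ramp u v n \<le> (\<lambda>t. max (delta v t - delta u t) 0)" for n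
    unfolding ramp_def by (rule le_funI) simp
  ultimately have "\<exists>s. is_sup_in FBL (range (ramp u v)) s"
    by (intro dsc[unfolded dedekind_sigma_complete_def, rule_format] conjI bexI) auto
  then obtain s where s: "is_sup_in FBL (range (ramp u v)) s" ..
  then have "s \<in> FBL" unfolding is_sup_in_def by blast
  define p where "p = (\<lambda>x. 1/2 * \<chi> x)"
  note shifted = Lstar_half_shift[OF \<chi>(1), folded p_def]
  from shifted[of 0] have "p \<in> Lstar" unfolding Lstar_cball_def p_def by simp
  obtain d where "d > 0" and near: "\<And>q. q \<in> Lstar_cball p d \<Longrightarrow> \<bar>s q - s p\<bar> < 1/4"
    using FBL_continuous[OF \<open>s \<in> FBL\<close> \<open>p \<in> Lstar\<close>, of "1/4"] by auto
  define t where "t = min d (1/2)"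
  have t: "0 < t" "t \<le> d" "t \<le> 1/2" using \<open>d > 0\<close> unfolding t_def by auto
  have near_pts: "(\<lambda>x. 1/2 * \<chi> x + c) \<in> Lstar_cball p d" if "\<bar>c\<bar> \<le> t" for c
    using shifted[of c] Lstar_cball_mono[of "\<bar>c\<bar>" d p] that t by auto
  define q_pos where "q_pos = (\<lambda>x. 1/2 * \<chi> x + t)"
  define q_neg where "q_neg = (\<lambda>x. 1/2 * \<chi> x + -t)"
  have q: "q_pos \<in> Lstar_cball p d" "q_neg \<in> Lstar_cball p d"
    unfolding q_pos_def q_neg_def using near_pts[of t] near_pts[of "-t"] t by simp_all
  then have "q_pos \<in> Lstar" "q_neg \<in> Lstar" using Lstar_cball_subset by blast+
  have "1/2 \<le> s q_pos" using sup_ramp_ge[OF s \<open>q_pos \<in> Lstar\<close>] \<chi> t by (simp add: q_pos_def)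
  moreover have "s q_neg \<le> 0" using sup_ramp_nonpos[OF s \<open>q_neg \<in> Lstar\<close>] \<chi> t by (simp add: q_neg_def)
  ultimately show False using near[OF q(1)] near[OF q(2)] by linarith
qed

section \<open>Atoms\<close>

lemma atom_FBL_not_separated:
  assumes atom: "is_atom_in FBL a" and h: "h \<in> gen_sublattice" "\<And>t. h t \<ge> 0"
    and p: "h p = 0" "a p > 0" and q: "h q > 0" "a q > 0"
  shows False
proof -
  have "a \<in> FBL" and a0: "(\<lambda>_. 0) \<le> a"
    and atomic: "\<And>y. y \<in> FBL \<Longrightarrow> (\<lambda>_. 0) \<le> y \<Longrightarrow> y \<le> a \<Longrightarrow> \<exists>c::real. y = (\<lambda>t. c * a t)"
    using atom unfolding is_atom_in_def by auto
  define y where "y = (\<lambda>t. min (a t) (h t))"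
  have "y \<in> FBL" unfolding y_def by (rule FBL_inf[OF \<open>a \<in> FBL\<close> gen_sublattice_FBL[OF h(1)]])
  moreover have "(\<lambda>_. 0) \<le> y" "y \<le> a" using a0 h(2) unfolding y_def by (auto simp: le_fun_def)
  ultimately obtain c where c: "y = (\<lambda>t. c * a t)" using atomic by blast
  have "c * a p = 0" using c p unfolding y_def by (metis min.commute min_absorb1 order_less_imp_le)
  with p(2) have "c = 0" by simp
  moreover have "y q > 0" unfolding y_def using q by simp
  ultimately show False using c by simp
qed

lemma gen_sublattice_separates_nearby_nonconstant:
  fixes p :: "'a::lattice \<Rightarrow> real"
  assumes p: "p \<in> Lstar" "p u \<noteq> p v" and t: "0 < t" "t \<le> 1"
  obtains q h where "q \<in> Lstar_cball p (2 * t)" "h \<in> gen_sublattice" "\<And>s. h s \<ge> 0"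
    "h p = 0" "h q > 0"
proof -
  define q where "q = (\<lambda>x. (1 - t) * p x + t)"
  define h where "h = (\<lambda>s. \<bar>p v * delta u s - p u * delta v s\<bar>)"
  have q: "q \<in> Lstar_cball p (2 * t)" unfolding q_def using Lstar_shift_up[OF p(1)] t by simp
  then have "q \<in> Lstar" using Lstar_cball_subset by blast
  have "h q = \<bar>t * (p v - p u)\<bar>"
    unfolding h_def using \<open>q \<in> Lstar\<close> by (simp add: delta_Lstar q_def algebra_simps)
  then have "h q > 0" using p(2) t by (simp add: abs_mult)
  moreover have "h \<in> gen_sublattice"
    unfolding h_def by (intro gen_sublattice_abs gen_sublattice_diff gen_scale gen_delta)
  moreover have "h p = 0" unfolding h_def using p by (simp add: delta_Lstar)
  ultimately show ?thesis using that q unfolding h_def by simp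
qed

lemma gen_sublattice_separates_nearby_constant:
  fixes \<chi> p :: "'a::lattice \<Rightarrow> real"
  assumes \<chi>: "\<chi> \<in> Lstar" "\<chi> u \<noteq> \<chi> v" and p: "p \<in> Lstar" "\<And>x. p x = c"
    and t: "0 < t" "t \<le> 1"
  obtains q h where "q \<in> Lstar_cball p (2 * t)" "h \<in> gen_sublattice" "\<And>s. h s \<ge> 0"
    "h p = 0" "h q > 0"
proof -
  define q where "q = (\<lambda>x. t * \<chi> x + (1 - t) * c)"
  define h where "h = (\<lambda>s. \<bar>delta v s - delta u s\<bar>)"
  have bounds: "\<bar>t * \<chi> x\<bar> \<le> t" "\<bar>(1 - t) * c\<bar> \<le> 1 - t" "\<bar>\<chi> x - c\<bar> \<le> 2" for x
    using Lstar_abs_le[OF \<chi>(1), of x] Lstar_abs_le[OF p(1), of u] p(2)[of u] t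
    by (auto simp: abs_mult intro: mult_left_le)
  have "t * \<chi> y + (1 - t) * c \<in> {-1..1}" for y
    using bounds(1)[of y] bounds(2) by (auto simp: abs_le_iff)
  then have "q \<in> Lstar" unfolding q_def using t by (intro Lstar_affine[OF \<chi>(1)]) auto
  moreover have "\<bar>q x - p x\<bar> \<le> 2 * t" for x
  proof -
    have "q x - p x = t * (\<chi> x - c)" unfolding q_def p(2) by (simp add: algebra_simps)
    with bounds(3)[of x] t show ?thesis by (simp add: abs_mult mult_left_le)
  qed
  ultimately have q: "q \<in> Lstar_cball p (2 * t)" unfolding Lstar_cball_def by blast
  have "h q = t * \<bar>\<chi> v - \<chi> u\<bar>"
    unfolding h_def q_def using \<open>q \<in> Lstar\<close> t
    by (simp add: delta_Lstar q_def abs_mult flip: right_diff_distrib)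
  then have "h q > 0" using \<chi>(2) t by simp
  moreover have "h \<in> gen_sublattice" unfolding h_def by (intro gen_sublattice_abs gen_sublattice_diff gen_delta)
  moreover have "h p = 0" unfolding h_def using p by (simp add: delta_Lstar)
  ultimately show ?thesis using that q unfolding h_def by simp
qed

lemma FBL_no_atom:
  fixes \<chi> :: "'a::lattice \<Rightarrow> real"
  assumes \<chi>: "\<chi> \<in> Lstar" "\<chi> u \<noteq> \<chi> v"
  shows "\<not> is_atom_in (FBL :: (('a \<Rightarrow> real) \<Rightarrow> real) set) a"
proof
  assume atom: "is_atom_in FBL a"
  then have "a \<in> FBL" "(\<lambda>_. 0) \<le> a" "a \<noteq> (\<lambda>_. 0)" unfolding is_atom_in_def by auto
  then obtain p where "a p > 0" by (metis le_funD order_less_le ext)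
  with FBL_vanishes[OF \<open>a \<in> FBL\<close>] have "p \<in> Lstar" by force
  obtain d where "d > 0" and near: "\<And>q. q \<in> Lstar_cball p d \<Longrightarrow> a q > 0"
    using FBL_positive_near[OF \<open>a \<in> FBL\<close> \<open>p \<in> Lstar\<close> \<open>a p > 0\<close>] by auto
  define t where "t = min (d / 2) 1"
  have t: "0 < t" "t \<le> 1" "2 * t \<le> d" using \<open>d > 0\<close> unfolding t_def by auto
  obtain q h where "q \<in> Lstar_cball p (2 * t)" "h \<in> gen_sublattice" "\<And>s. h s \<ge> 0"
    "h p = 0" "h q > 0"
  proof (cases "\<exists>u' v'. p u' \<noteq> p v'")
    case True
    then show ?thesis
      using gen_sublattice_separates_nearby_nonconstant[OF \<open>p \<in> Lstar\<close> _ t(1,2)] that by blast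
  next
    case False
    then show ?thesis
      using gen_sublattice_separates_nearby_constant[OF \<chi> \<open>p \<in> Lstar\<close> _ t(1,2)] that by blast
  qed
  moreover from this(1) have "a q > 0" using near Lstar_cball_mono[OF t(3)] by blast
  ultimately show False using atom_FBL_not_separated[OF atom] \<open>a p > 0\<close> by blast
qed

theorem mainTheorem12:
  assumes "\<exists>a b :: 'a::distrib_lattice. a \<noteq> b"
  shows "\<not> dedekind_sigma_complete (FBL :: (('a \<Rightarrow> real) \<Rightarrow> real) set)
       \<and> \<not> order_continuous_norm (FBL :: (('a \<Rightarrow> real) \<Rightarrow> real) set) fbl_norm
       \<and> \<not> (\<exists>a. is_atom_in (FBL :: (('a \<Rightarrow> real) \<Rightarrow> real) set) a)"
proof -
  obtain a b :: 'a where "a \<noteq> b" using assms by blast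
  then obtain u v :: 'a where "\<not> v \<le> u" by (metis order.eq_iff)
  then obtain \<chi> where \<chi>: "\<chi> \<in> Lstar" "\<chi> u = 0" "\<chi> v = 1"
    using Lstar_separates_points by blast
  then have "\<chi> u \<noteq> \<chi> v" by simp
  with \<chi> show ?thesis
    using FBL_not_dedekind_sigma_complete FBL_not_order_continuous FBL_no_atom by blast
qed

end
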